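(* Let $n \ge 1$, let $x, y$ be binary words of the same length, and let $a, b, a', b' \in \{0,1\}$ with $a = 0$ or $a' = 0$. If $D(x,y) \ge n$ and $D(xa', yb') \ge n$, then $D(xa'a, yb'b) \ge n$.
   Context: For a binary word $x = x_1\cdots x_\ell$, $[x] = \sum_{j=1}^{\ell} x_j F_{\ell-j+2}$ where $F_0=0,F_1=1,F_k=F_{k-1}+F_{k-2}$. For words $u,v$, $D(u,v) = [v] - n[u]$. *)

theory Defs
  imports Main "HOL-Number_Theory.Fib"
begin

text \<open>Binary words are lists of naturals with entries in {0,1}.
  The value [x] = sum_{j=1}^{l} x_j F_{l-j+2}; with 0-based index j this is
  sum_{j<l} x!j * F_{l-j+1}.\<close>

definition binword :: "nat list \<Rightarrow> bool" where
  "binword x \<longleftrightarrow> set x \<subseteq> {0, 1}"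

definition fval :: "nat list \<Rightarrow> int" where
  "fval x = (\<Sum>j<length x. int (x ! j) * int (fib (length x - j + 1)))"

definition D :: "nat \<Rightarrow> nat list \<Rightarrow> nat list \<Rightarrow> int" where
  "D n u v = fval v - int n * fval u"

end

theory Submission
  imports Defs
begin

text \<open>Appending two letters satisfies the Fibonacci recurrence [x c d] = [x c] + [x] + c + d,
  so D(x a' a, y b' b) = D(x a', y b') + D(x, y) + b' + b - n (a' + a).  Since at most one
  of a', a is 1, the last term is at most n, and the two given bounds D \<ge> n finish the proof.\<close>

lemma fval_append_two:
  "fval (x @ [c, d]) = fval (x @ [c]) + fval x + int c + int d"
proof -
  let ?w = "\<lambda>k j. int (x ! j) * int (fib (length x - j + k))"
  have "fval (x @ [c, d]) = (\<Sum>j<length x. ?w 3 j) + 2 * int c + int d"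
    by (simp add: fval_def nth_append Suc_diff_le numeral_3_eq_3 numeral_2_eq_2)
  also have "(\<Sum>j<length x. ?w 3 j) = (\<Sum>j<length x. ?w 2 j) + (\<Sum>j<length x. ?w 1 j)"
    by (simp add: sum.distrib[symmetric] numeral_3_eq_3 numeral_2_eq_2 algebra_simps)
  also have "(\<Sum>j<length x. ?w 2 j) = fval (x @ [c]) - int c"
    by (simp add: fval_def nth_append Suc_diff_le numeral_2_eq_2)
  also have "(\<Sum>j<length x. ?w 1 j) = fval x"
    by (simp add: fval_def)
  finally show ?thesis by simp
qed

lemma D_append_two:
  "D n (x @ [c, d]) (y @ [e, f])
     = D n (x @ [c]) (y @ [e]) + D n x y + int e + int f - int n * (int c + int d)"
  by (simp add: D_def fval_append_two algebra_simps)

theorem lemma10: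
  fixes n a b a' b' :: nat and x y :: "nat list"
  assumes "n \<ge> 1"
    and "binword x" and "binword y" and "length x = length y"
    and "a \<in> {0, 1}" and "b \<in> {0, 1}" and "a' \<in> {0, 1}" and "b' \<in> {0, 1}"
    and "a = 0 \<or> a' = 0"
    and "D n x y \<ge> int n"
    and "D n (x @ [a']) (y @ [b']) \<ge> int n"
  shows "D n (x @ [a', a]) (y @ [b', b]) \<ge> int n"
proof -
  have "int n * (int a' + int a) \<le> int n"
    using assms(5,7,9) by auto
  then show ?thesis
    using D_append_two[of n x a' a y b' b] assms(10,11) by linarith
qed

end
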